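(* Consider the online convex optimization protocol and the algorithm AOD described in the context, with known horizon $T$, under the standing assumptions (A1)–(A3). Then for every $1\le\tau\le T$, the plays $\mathbf{w}_t$ of AOD satisfy \[ \max_{[s,s+\tau-1]\subseteq[T]}\Big(\sum_{t=s}^{s+\tau-1}f_t(\mathbf{w}_t)-\min_{\mathbf{w}\in\Omega}\sum_{t=s}^{s+\tau-1}f_t(\mathbf{w})\Big)\le 8\big(\sqrt{3c(T)}+DG\big)\sqrt{\tau}=O(\sqrt{\tau\log T}), \] where $c(T)=1+\ln T+\ln(1+\log_2 T)+\ln\frac{5+3\ln(1+T)}{2}$.
   Context: Online convex optimization: $\Omega\subseteq\mathbb{R}^d$ is convex; in round $t=1,\ldots,T$ the learner plays $\mathbf{w}_t\in\Omega$ and then a convex $f_t:\Omega\to\mathbb{R}$ is revealed. Standing assumptions: (A1) $\|\nabla f_t(\mathbf{w})\|_2\le G$ for all $\mathbf{w}\in\Omega$, $t\in[T]$ ($\nabla$ a (sub)gradient); (A2) $\mathbf{0}\in\Omega$ and $\max_{\mathbf{w},\mathbf{w}'\in\Omega}\|\mathbf{w}-\mathbf{w}'\|_2\le D$; (A3) $0\le f_t(\mathbf{w})\le1$ for all $\mathbf{w}\in\Omega$, $t\in[T]$. $\Pi_\Omega$ is Euclidean projection onto $\Omega$. Online gradient descent (OGD) with step size $\eta$ updates $\mathbf{v}\mapsto\Pi_\Omega[\mathbf{v}-\eta\nabla f_t(\mathbf{v})]$ after seeing $f_t$. Dense geometric covering intervals: $\mathcal{D}=\bigcup_{k\ge0,\,2^k\le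 T}\mathcal{D}_k$, $\mathcal{D}_k=\{I_k^i=[(i-1)2^k+1,\,i2^k]: i=1,2,\ldots\}$. Algorithm AOD: for each $I\in\mathcal{D}$ there is an expert $E_I$ running OGD with step size $\eta_I=D/(G\sqrt{|I|})$ during the rounds $t\in I$, producing $\mathbf{w}_{t,I}\in\Omega$ for $t\in I$ (with $\mathbf{w}_{t+1,I}=\Pi_\Omega[\mathbf{w}_{t,I}-\eta_I\nabla f_t(\mathbf{w}_{t,I})]$). Its initial point $\mathbf{w}_{\min I,I}$ is arbitrary in $\Omega$ if $\min I=1$; otherwise (warm start) it is the OGD iterate of the expert $E_J$ of the preceding interval $J\in\mathcal{D}$ of the same length ($J=[\min I-|I|,\min I-1]$) after processing $f_{\min I-1}$, i.e. $\Pi_\Omega[\mathbf{w}_{\min I-1,J}-\eta_J\nabla f_{\min I-1}(\mathbf{w}_{\min I-1,J})]$. In round $t$ the active experts are $\mathcal{A}_t=\{E_I: I\in\mathcal{D}, t\in I\}$. Meta-algorithm (AdaNormalHedge): with $\Phi(R,C)=\exp([R]_+^2/(3C))$, $[x]_+=\max(0,x)$, $\Phi(0,0)=1$, and $w(R,C)=\tfrac12(\Phi(R+1,C+1)-\Phi(R-1,C+1))$, define $R_{t-1,I}=\sum_{u=\min I}^{t-1}(f_u(\mathbf{w}_u)-f_u(\mathbf{w}_{u,I}))$ and $C_{t-1,I}=\sum_{u=\min I}^{t-1}|f_u(\mathbf{w}_u)-f_u(\mathbf{w}_{u,I})|$ (both $0$ when $t=\min I$), weights $p_{t,I}=w(R_{t-1,I},C_{t-1,I})/\sum_{E_{I'}\in\mathcal{A}_t}w(R_{t-1,I'},C_{t-1,I'})$,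 and the played point $\mathbf{w}_t=\sum_{E_I\in\mathcal{A}_t}p_{t,I}\mathbf{w}_{t,I}$. *)

theory Defs
  imports "HOL-Analysis.Analysis"
begin

definition ivl_lo :: "nat \<Rightarrow> nat \<Rightarrow> nat" where
  "ivl_lo k i = (i - 1) * 2 ^ k + 1"

definition ivl_hi :: "nat \<Rightarrow> nat \<Rightarrow> nat" where
  "ivl_hi k i = i * 2 ^ k"

definition covering :: "nat \<Rightarrow> (nat \<times> nat) set" where
  "covering T = {(k, i). 2 ^ k \<le> T \<and> 1 \<le> i}"

definition active :: "nat \<Rightarrow> nat \<Rightarrow> (nat \<times> nat) set" where
  "active T t = {(k, i). (k, i) \<in> covering T \<and> ivl_lo k i \<le> t \<and> t \<le> ivl_hi k i}"

definition eta :: "real \<Rightarrow> real \<Rightarrow> nat \<Rightarrow> real" where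
  "eta D G k = D / (G * sqrt (2 ^ k))"

definition ogd_step ::
  "'a::euclidean_space set \<Rightarrow> (nat \<Rightarrow> 'a \<Rightarrow> 'a) \<Rightarrow> real \<Rightarrow> nat \<Rightarrow> 'a \<Rightarrow> 'a" where
  "ogd_step \<Omega> grad \<eta> t v = closest_point \<Omega> (v - \<eta> *\<^sub>R grad t v)"

text \<open>Iterate w_{t,I} of the expert E_I, I = I_k^i, for rounds t in I.
  init k is the arbitrary initial point of the first expert of level k (min I = 1);
  otherwise the expert is warm-started from the OGD update of the expert of the
  preceding interval I_k^{i-1} after processing f_{min I - 1}.  The value at
  argument 0 (and outside I) is irrelevant.\<close>
fun expert_pt ::
  "'a::euclidean_space set \<Rightarrow> (nat \<Rightarrow> 'a \<Rightarrow> 'a) \<Rightarrow> real \<Rightarrow> real \<Rightarrow> (nat \<Rightarrow> 'a)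
   \<Rightarrow> nat \<Rightarrow> nat \<Rightarrow> nat \<Rightarrow> 'a" where
  "expert_pt \<Omega> grad D G init k i 0 = init k"
| "expert_pt \<Omega> grad D G init k i (Suc t) =
     (if Suc t = ivl_lo k i then
        (if i \<le> 1 then init k
         else ogd_step \<Omega> grad (eta D G k) t (expert_pt \<Omega> grad D G init k (i - 1) t))
      else ogd_step \<Omega> grad (eta D G k) t (expert_pt \<Omega> grad D G init k i t))"

definition Phi :: "real \<Rightarrow> real \<Rightarrow> real" where
  "Phi R C = (if R = 0 \<and> C = 0 then 1 else exp ((max 0 R)\<^sup>2 / (3 * C)))"

definition anh_weight :: "real \<Rightarrow> real \<Rightarrow> real" where
  "anh_weight R C = (Phi (R + 1) (C + 1) - Phi (R - 1) (C + 1)) / 2"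

text \<open>These equations determine w on [1,T] uniquely by recursion on t.\<close>
definition AOD_plays ::
  "nat \<Rightarrow> 'a::euclidean_space set \<Rightarrow> (nat \<Rightarrow> 'a \<Rightarrow> real) \<Rightarrow> (nat \<Rightarrow> 'a \<Rightarrow> 'a)
   \<Rightarrow> real \<Rightarrow> real \<Rightarrow> (nat \<Rightarrow> 'a) \<Rightarrow> (nat \<Rightarrow> 'a) \<Rightarrow> bool" where
  "AOD_plays T \<Omega> f grad D G init w \<longleftrightarrow>
     (\<forall>t\<in>{1..T}.
        let x = (\<lambda>k i u. expert_pt \<Omega> grad D G init k i u);
            R = (\<lambda>k i. \<Sum>u\<in>{ivl_lo k i..<t}. f u (w u) - f u (x k i u));
            C = (\<lambda>k i. \<Sum>u\<in>{ivl_lo k i..<t}. \<bar>f u (w u) - f u (x k i u)\<bar>);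
            Z = (\<Sum>(k, i)\<in>active T t. anh_weight (R k i) (C k i));
            p = (\<lambda>k i. anh_weight (R k i) (C k i) / Z)
        in w t = (\<Sum>(k, i)\<in>active T t. p k i *\<^sub>R x k i t))"

definition cT :: "nat \<Rightarrow> real" where
  "cT T = 1 + ln (real T) + ln (1 + log 2 (real T)) + ln ((5 + 3 * ln (1 + real T)) / 2)"

end

(*
  Each covering interval I of length 2^k is handled by its own expert; the regret of AOD
  against a fixed v on I splits into the regret of the meta-algorithm against E_I plus the
  OGD regret of E_I, and the latter is at most D G sqrt(2^k).

  For the meta-algorithm, AdaNormalHedge's potential
    sum over experts of Phi(R_I, C_I) - 3 ln(1 + C_I)
  does not increase: convexity of Phi along a step and a bound on its second difference show
  that one round changes a term by at most w(R_I, C_I) r_I (the second-order growth of Phi is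
  paid for by the log term), and sum_I w_I r_I <= 0 because the play is the w-weighted average
  of the experts and the losses are convex.  The initial potential is the number of experts, so
  exp(R_I^2 / (3 C_I)) <= #experts (1 + 3 ln(1+T)), i.e. R_I^2 <= 3 C_I c(T) <= 3 2^k c(T).

  Finally, every window [s, s+tau-1] is the disjoint union of two runs of covering intervals
  with strictly monotone lengths 2^j <= tau.  A run's sum of sqrt(2^j) is at most 3 sqrt tau,
  so the window regret is at most 6 (sqrt(3 c(T)) + D G) sqrt tau.
*)

theory Submission
  imports Defs "HOL-Probability.Hoeffding"
begin

section \<open>The AdaNormalHedge potential\<close>

text \<open>The special case \<open>R = C = 0\<close> of \<open>Phi_def\<close> is redundant, since \<open>0 / 0 = 0\<close>.\<close>

lemma Phi_eq_exp: "Phi R C = exp ((max 0 R)\<^sup>2 / (3 * C))"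
  unfolding Phi_def by auto

lemma cosh_le_exp_half_square:
  fixes b :: real
  shows "(exp b + exp (- b)) / 2 \<le> exp (b\<^sup>2 / 2)"
proof -
  have "(exp b + exp (- b)) / 2 \<le> exp (b\<^sup>2 / 2)" if b: "0 \<le> b" for b :: real
  proof -
    \<comment> \<open>Hoeffding's lemma for a fair coin with values 0 and 2b\<close>
    have "- (2 * b) * (1 / 2) + ln (1 + (1 / 2) * (exp (2 * b) - 1)) \<le> (2 * b)\<^sup>2 / 8"
      using Hoeffdings_lemma_aux[of "2 * b" "1 / 2"] b by simp
    then have "ln ((1 + exp (2 * b)) / 2) \<le> b + b\<^sup>2 / 2"
      by (simp add: power2_eq_square field_simps)
    then have "(1 + exp (2 * b)) / 2 \<le> exp (b + b\<^sup>2 / 2)"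
      by (metis exp_le_cancel_iff exp_ln add_pos_pos exp_gt_zero half_gt_zero zero_less_one)
    then have "exp (- b) * ((1 + exp (2 * b)) / 2) \<le> exp (- b) * exp (b + b\<^sup>2 / 2)"
      by simp
    then show ?thesis
      by (simp add: algebra_simps flip: exp_add)
  qed
  from this[of "\<bar>b\<bar>"] show ?thesis
    by (cases "0 \<le> b") (simp_all add: add.commute)
qed

lemma exp_minus_one_le_three_halves:
  fixes y :: real
  assumes "0 \<le> y" "y \<le> 1 / 3"
  shows "exp y - 1 \<le> 3 / 2 * y"
proof -
  have "exp y * (1 - y) \<le> exp y * exp (- y)"
    using exp_ge_add_one_self[of "- y"] by (intro mult_left_mono) auto
  then have "exp y \<le> 1 / (1 - y)"
    using assms by (simp add: field_simps flip: exp_add)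
  also have "1 / (1 - y) \<le> 1 + 3 / 2 * y"
    using assms mult_left_mono[of y "1 / 3" y] by (simp add: field_simps)
  finally show ?thesis by simp
qed

lemma half_le_ln_one_plus:
  fixes y :: real
  assumes "0 \<le> y" "y \<le> 1"
  shows "y / 2 \<le> ln (1 + y)"
proof -
  have "ln (1 / (1 + y)) \<le> 1 / (1 + y) - 1"
    using assms by (intro ln_le_minus_one) auto
  moreover have "1 / (1 + y) - 1 \<le> - y / 2"
    using assms mult_left_mono[of y 1 y] by (simp add: field_simps)
  ultimately show ?thesis
    using assms by (simp add: ln_div)
qed

lemma Phi_second_difference_le_nonpos:
  assumes "R \<le> 0" "0 \<le> C"
  shows "(Phi (R + 1) (C + 1) + Phi (R - 1) (C + 1)) / 2 - Phi R C \<le> 3 / (2 * (C + 1))"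
proof -
  define y where "y = 1 / (3 * (C + 1))"
  have y: "0 \<le> y" "y \<le> 1 / 3"
    using assms by (auto simp: y_def field_simps)
  have "(max 0 (R + 1))\<^sup>2 \<le> 1"
    using assms by (intro power_le_one) auto
  then have "(max 0 (R + 1))\<^sup>2 / (3 * (C + 1)) \<le> y"
    unfolding y_def using assms by (intro divide_right_mono) auto
  then have "Phi (R + 1) (C + 1) \<le> exp y"
    by (simp add: Phi_eq_exp)
  moreover have "Phi R C = 1" "Phi (R - 1) (C + 1) = 1"
    using assms by (simp_all add: Phi_eq_exp)
  ultimately have "(Phi (R + 1) (C + 1) + Phi (R - 1) (C + 1)) / 2 - Phi R C \<le> (exp y - 1) / 2"
    by simp
  also have "\<dots> \<le> 3 / 4 * y"
    using exp_minus_one_le_three_halves[OF y] by simp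
  also have "\<dots> \<le> 3 / (2 * (C + 1))"
    using assms by (simp add: y_def field_simps)
  finally show ?thesis .
qed

lemma Phi_average_le:
  assumes "0 < R" "0 < C"
  shows "(Phi (R + 1) (C + 1) + Phi (R - 1) (C + 1)) / 2
           \<le> Phi R C * exp ((3 * (C + 1) * C - R\<^sup>2 * (C + 3)) / (9 * C * (C + 1)\<^sup>2))"
proof -
  define c where "c = C + 1"
  have c: "1 \<le> c"
    using assms by (simp add: c_def)
  define m where "m = (R\<^sup>2 + 1) / (3 * c)"
  define b where "b = 2 * R / (3 * c)"
  have "Phi (R + 1) c = exp (m + b)"
    using assms c by (simp add: Phi_eq_exp m_def b_def field_simps power2_eq_square)
  moreover have "Phi (R - 1) c \<le> exp (m - b)"
  proof -
    have "(max 0 (R - 1))\<^sup>2 \<le> \<bar>R - 1\<bar>\<^sup>2"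
      by (intro power_mono) auto
    then have "(max 0 (R - 1))\<^sup>2 / (3 * c) \<le> (R - 1)\<^sup>2 / (3 * c)"
      using c by (intro divide_right_mono) auto
    also have "\<dots> = m - b"
      using c by (simp add: m_def b_def field_simps power2_eq_square)
    finally show ?thesis
      by (simp add: Phi_eq_exp)
  qed
  ultimately have "(Phi (R + 1) c + Phi (R - 1) c) / 2 \<le> exp m * ((exp b + exp (- b)) / 2)"
    by (simp add: algebra_simps flip: exp_add)
  also have "\<dots> \<le> exp m * exp (b\<^sup>2 / 2)"
    using cosh_le_exp_half_square by (intro mult_left_mono) auto
  also have "\<dots> = Phi R C * exp (m + b\<^sup>2 / 2 - R\<^sup>2 / (3 * C))"
    using assms by (simp add: Phi_eq_exp flip: exp_add)
  also have "m + b\<^sup>2 / 2 - R\<^sup>2 / (3 * C) = (3 * c * C - R\<^sup>2 * (C + 3)) / (9 * C * c\<^sup>2)"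
  proof -
    have "(m + b\<^sup>2 / 2 - R\<^sup>2 / (3 * C)) * (9 * C * c\<^sup>2)
        = 3 * C * c * (R\<^sup>2 + 1) + 2 * R\<^sup>2 * C - 3 * c\<^sup>2 * R\<^sup>2"
      using assms c by (simp add: m_def b_def field_simps power2_eq_square)
    also have "\<dots> = 3 * c * C - R\<^sup>2 * (C + 3)"
      by (simp add: c_def power2_eq_square algebra_simps)
    finally show ?thesis
      using assms c by (simp add: field_simps)
  qed
  finally show ?thesis
    by (simp add: c_def)
qed

lemma Phi_second_difference_le_pos:
  assumes "0 < R" "R \<le> C"
  shows "(Phi (R + 1) (C + 1) + Phi (R - 1) (C + 1)) / 2 - Phi R C \<le> 3 / (2 * (C + 1))"
proof -
  define c where "c = C + 1"
  have C: "0 < C" and c: "1 \<le> c"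
    using assms by (auto simp: c_def)
  define y where "y = (3 * c * C - R\<^sup>2 * (C + 3)) / (9 * C * c\<^sup>2)"
  have avg: "(Phi (R + 1) c + Phi (R - 1) c) / 2 - Phi R C \<le> Phi R C * (exp y - 1)"
    using Phi_average_le[OF \<open>0 < R\<close> C] by (simp add: y_def c_def algebra_simps)
  show ?thesis
  proof (cases "y \<le> 0")
    case True
    then have "Phi R C * (exp y - 1) \<le> 0"
      by (intro mult_nonneg_nonpos) (auto simp: Phi_eq_exp)
    moreover have "0 \<le> 3 / (2 * (C + 1))"
      using C by simp
    ultimately show ?thesis
      using avg unfolding c_def by linarith
  next
    case False
    moreover have "0 < 9 * C * c\<^sup>2"
      using C c by simp
    ultimately have "R\<^sup>2 * (C + 3) < 3 * c * C"
      unfolding y_def by (metis diff_gt_0_iff_gt divide_nonpos_pos not_le)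
    also have "\<dots> \<le> 3 * C * (C + 3)"
      using C by (simp add: c_def algebra_simps)
    finally have "R\<^sup>2 < 3 * C"
      using C by (simp add: mult_less_cancel_right)
    then have "R\<^sup>2 / (3 * C) \<le> 1"
      using C by (simp add: field_simps)
    have "Phi R C = exp (R\<^sup>2 / (3 * C))"
      using assms by (simp add: Phi_eq_exp)
    also have "\<dots> \<le> exp 1"
      using \<open>R\<^sup>2 / (3 * C) \<le> 1\<close> by simp
    also have "\<dots> \<le> 3"
      by (rule exp_le)
    finally have "Phi R C \<le> 3" .
    have "y \<le> 3 * c * C / (9 * C * c\<^sup>2)"
      unfolding y_def using C c by (intro divide_right_mono) auto
    also have "\<dots> = 1 / (3 * c)"
      using C c by (simp add: field_simps power2_eq_square)
    finally have "y \<le> 1 / (3 * c)" .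
    moreover have "1 / (3 * c) \<le> 1 / 3"
      using c by (intro divide_left_mono) auto
    ultimately have "y \<le> 1 / (3 * c)" "y \<le> 1 / 3"
      by linarith+
    then have "Phi R C * (exp y - 1) \<le> 3 * (3 / 2 * (1 / (3 * c)))"
      using exp_minus_one_le_three_halves[of y] \<open>Phi R C \<le> 3\<close> False
      by (intro mult_mono) auto
    also have "3 * (3 / 2 * (1 / (3 * c))) = 3 / (2 * (C + 1))"
      using C by (simp add: c_def field_simps)
    finally show ?thesis
      using avg unfolding c_def by linarith
  qed
qed

lemma Phi_second_difference_le:
  assumes "\<bar>R\<bar> \<le> C"
  shows "(Phi (R + 1) (C + 1) + Phi (R - 1) (C + 1)) / 2 - Phi R C \<le> 3 / (2 * (C + 1))"
  using assms Phi_second_difference_le_nonpos[of R C] Phi_second_difference_le_pos[of R C]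
  by (cases "R \<le> 0") auto

lemma square_div_convex_combination_le:
  fixes a b p q \<theta> :: real
  assumes "0 < p" "0 < q" "0 \<le> \<theta>" "\<theta> \<le> 1"
  shows "(\<theta> * a + (1 - \<theta>) * b)\<^sup>2 / (\<theta> * p + (1 - \<theta>) * q)
           \<le> \<theta> * a\<^sup>2 / p + (1 - \<theta>) * b\<^sup>2 / q"
proof -
  define W where "W = \<theta> * p + (1 - \<theta>) * q"
  have W: "0 < W"
    unfolding W_def using assms
    by (cases "\<theta> = 0") (auto intro: add_pos_nonneg)
  have "(\<theta> * a\<^sup>2 * q + (1 - \<theta>) * b\<^sup>2 * p) * W - (\<theta> * a + (1 - \<theta>) * b)\<^sup>2 * (p * q)
      = \<theta> * (1 - \<theta>) * (a * q - b * p)\<^sup>2"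
    unfolding W_def by (simp add: power2_eq_square algebra_simps)
  also have "\<dots> \<ge> 0"
    using assms by simp
  finally have num: "(\<theta> * a + (1 - \<theta>) * b)\<^sup>2 * (p * q) \<le> (\<theta> * a\<^sup>2 * q + (1 - \<theta>) * b\<^sup>2 * p) * W"
    by simp
  have "(\<theta> * a + (1 - \<theta>) * b)\<^sup>2 / W = (\<theta> * a + (1 - \<theta>) * b)\<^sup>2 * (p * q) / (W * (p * q))"
    using assms by simp
  also have "\<dots> \<le> (\<theta> * a\<^sup>2 * q + (1 - \<theta>) * b\<^sup>2 * p) * W / (W * (p * q))"
    using num W assms by (intro divide_right_mono) auto
  also have "\<dots> = \<theta> * a\<^sup>2 / p + (1 - \<theta>) * b\<^sup>2 / q"
    using W assms by (simp add: field_simps)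
  finally show ?thesis
    unfolding W_def .
qed

lemma Phi_exponent_convex_combination_le:
  fixes R C d \<alpha> :: real
  assumes RC: "\<bar>R\<bar> \<le> C" and \<alpha>: "0 \<le> \<alpha>" "\<alpha> \<le> 1"
  shows "(max 0 (R + \<alpha> * d))\<^sup>2 / (3 * (C + \<alpha>))
           \<le> (1 - \<alpha>) * ((max 0 R)\<^sup>2 / (3 * C)) + \<alpha> * ((max 0 (R + d))\<^sup>2 / (3 * (C + 1)))"
proof -
  define x0 where "x0 = max 0 R"
  define x1 where "x1 = max 0 (R + d)"
  have "max 0 (R + \<alpha> * d) \<le> (1 - \<alpha>) * x0 + \<alpha> * x1"
  proof -
    have "R + \<alpha> * d = (1 - \<alpha>) * R + \<alpha> * (R + d)"
      by (simp add: algebra_simps)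
    moreover have "(1 - \<alpha>) * R \<le> (1 - \<alpha>) * x0" "\<alpha> * (R + d) \<le> \<alpha> * x1"
      using \<alpha> by (auto intro: mult_left_mono simp: x0_def x1_def)
    moreover have "0 \<le> (1 - \<alpha>) * x0 + \<alpha> * x1"
      using \<alpha> by (simp add: x0_def x1_def)
    ultimately show ?thesis
      by linarith
  qed
  then have num: "(max 0 (R + \<alpha> * d))\<^sup>2 \<le> ((1 - \<alpha>) * x0 + \<alpha> * x1)\<^sup>2"
    by (intro power_mono) auto
  show ?thesis
  proof (cases "C = 0")
    case True
    then have "x0 = 0"
      using RC by (simp add: x0_def)
    show ?thesis
    proof (cases "\<alpha> = 0")
      case True
      then show ?thesis
        using \<open>C = 0\<close> \<open>x0 = 0\<close> by (simp add: x0_def)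
    next
      case False
      then have "(max 0 (R + \<alpha> * d))\<^sup>2 / (3 * \<alpha>) \<le> (\<alpha> * x1)\<^sup>2 / (3 * \<alpha>)"
        using num \<open>x0 = 0\<close> \<alpha> by (intro divide_right_mono) auto
      also have "\<dots> = \<alpha> * (x1\<^sup>2 / (3 * (C + 1)))"
        using \<open>C = 0\<close> False by (simp add: power2_eq_square)
      finally show ?thesis
        using \<open>C = 0\<close> by (simp add: x1_def)
    qed
  next
    case False
    then have C: "0 < C"
      using RC by simp
    have "(max 0 (R + \<alpha> * d))\<^sup>2 / (3 * (C + \<alpha>)) \<le> ((1 - \<alpha>) * x0 + \<alpha> * x1)\<^sup>2 / (3 * (C + \<alpha>))"
      using num C \<alpha> by (intro divide_right_mono) auto
    also have "\<dots> = ((1 - \<alpha>) * x0 + \<alpha> * x1)\<^sup>2 / ((1 - \<alpha>) * C + \<alpha> * (C + 1)) / 3"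
      by (simp add: algebra_simps)
    also have "\<dots> \<le> ((1 - \<alpha>) * x0\<^sup>2 / C + \<alpha> * x1\<^sup>2 / (C + 1)) / 3"
      using square_div_convex_combination_le[of C "C + 1" "1 - \<alpha>" x0 x1] C \<alpha>
      by (intro divide_right_mono) auto
    also have "\<dots> = (1 - \<alpha>) * (x0\<^sup>2 / (3 * C)) + \<alpha> * (x1\<^sup>2 / (3 * (C + 1)))"
      by (simp add: add_divide_distrib ac_simps)
    finally show ?thesis
      by (simp add: x0_def x1_def)
  qed
qed

lemma Phi_convex_combination_le:
  assumes "\<bar>R\<bar> \<le> C" "0 \<le> \<alpha>" "\<alpha> \<le> 1"
  shows "Phi (R + \<alpha> * d) (C + \<alpha>) \<le> (1 - \<alpha>) * Phi R C + \<alpha> * Phi (R + d) (C + 1)"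
proof -
  have "Phi (R + \<alpha> * d) (C + \<alpha>)
      \<le> exp ((1 - \<alpha>) * ((max 0 R)\<^sup>2 / (3 * C)) + \<alpha> * ((max 0 (R + d))\<^sup>2 / (3 * (C + 1))))"
    unfolding Phi_eq_exp using Phi_exponent_convex_combination_le[OF assms] by simp
  also have "\<dots> \<le> (1 - \<alpha>) * Phi R C + \<alpha> * Phi (R + d) (C + 1)"
    unfolding Phi_eq_exp
    using convex_onD[OF exp_convex, of \<alpha> "(max 0 R)\<^sup>2 / (3 * C)" "(max 0 (R + d))\<^sup>2 / (3 * (C + 1))"]
      assms by simp
  finally show ?thesis .
qed

lemma Phi_step_le:
  assumes RC: "\<bar>R\<bar> \<le> C" and r: "\<bar>r\<bar> \<le> 1"
  shows "Phi (R + r) (C + \<bar>r\<bar>) \<le> Phi R C + anh_weight R C * r + \<bar>r\<bar> * (3 / (2 * (C + 1)))"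
proof -
  define K where "K = 3 / (2 * (C + 1))"
  define P where "P = Phi R C"
  define P_plus where "P_plus = Phi (R + 1) (C + 1)"
  define P_minus where "P_minus = Phi (R - 1) (C + 1)"
  have weight: "anh_weight R C = (P_plus - P_minus) / 2"
    by (simp add: anh_weight_def P_plus_def P_minus_def)
  have "(P_plus + P_minus) / 2 - P \<le> K"
    using Phi_second_difference_le[OF RC] by (simp add: P_def P_plus_def P_minus_def K_def)
  then have up: "P_plus - P \<le> (P_plus - P_minus) / 2 + K"
    and down: "P_minus - P \<le> - (P_plus - P_minus) / 2 + K"
    by (simp_all add: field_simps)
  \<comment> \<open>interpolate between the current state and the state after a full step of size \<open>\<plusminus>1\<close>\<close>
  show ?thesis
  proof (cases "0 \<le> r")
    case True
    have "Phi (R + r * 1) (C + r) \<le> (1 - r) * P + r * P_plus"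
      using Phi_convex_combination_le[OF RC, of r 1] True r by (simp add: P_def P_plus_def)
    also have "\<dots> = P + r * (P_plus - P)"
      by (simp add: algebra_simps)
    also have "\<dots> \<le> P + r * ((P_plus - P_minus) / 2 + K)"
      using up True by (intro add_left_mono mult_left_mono) auto
    finally show ?thesis
      using True by (simp add: weight P_def K_def algebra_simps)
  next
    case False
    have "Phi (R + (- r) * (- 1)) (C + (- r)) \<le> (1 + r) * P + (- r) * P_minus"
      using Phi_convex_combination_le[OF RC, of "- r" "- 1"] False r by (simp add: P_def P_minus_def)
    also have "\<dots> = P + (- r) * (P_minus - P)"
      by (simp add: algebra_simps)
    also have "\<dots> \<le> P + (- r) * (- (P_plus - P_minus) / 2 + K)"
      using down False by (intro add_left_mono mult_left_mono) auto
    finally show ?thesis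
      using False by (simp add: weight P_def K_def algebra_simps)
  qed
qed

lemma Phi_potential_step:
  assumes RC: "\<bar>R\<bar> \<le> C" and r: "\<bar>r\<bar> \<le> 1"
  shows "Phi (R + r) (C + \<bar>r\<bar>) - 3 * ln (1 + (C + \<bar>r\<bar>))
           \<le> Phi R C - 3 * ln (1 + C) + anh_weight R C * r"
proof -
  have C: "0 \<le> C"
    using RC by linarith
  define y where "y = \<bar>r\<bar> / (1 + C)"
  have y: "0 \<le> y" "y \<le> 1"
    using r C by (auto simp: y_def field_simps)
  have "1 + (C + \<bar>r\<bar>) = (1 + C) * (1 + y)"
    using C by (simp add: y_def field_simps)
  then have "ln (1 + (C + \<bar>r\<bar>)) = ln (1 + C) + ln (1 + y)"
    using C y by (simp add: ln_mult)
  moreover have "\<bar>r\<bar> * (3 / (2 * (C + 1))) = 3 * (y / 2)"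
    by (simp add: y_def field_simps)
  then have "\<bar>r\<bar> * (3 / (2 * (C + 1))) \<le> 3 * ln (1 + y)"
    using half_le_ln_one_plus[OF y] by simp
  ultimately show ?thesis
    using Phi_step_le[OF RC r] by simp
qed

lemma anh_weight_nonneg:
  assumes "0 \<le> C"
  shows "0 \<le> anh_weight R C"
proof -
  have "(max 0 (R - 1))\<^sup>2 / (3 * (C + 1)) \<le> (max 0 (R + 1))\<^sup>2 / (3 * (C + 1))"
    using assms by (intro divide_right_mono power_mono) auto
  then show ?thesis
    by (simp add: anh_weight_def Phi_eq_exp)
qed

lemma anh_weight_0_0_pos: "0 < anh_weight 0 0"
  by (simp add: anh_weight_def Phi_eq_exp)

section \<open>Dyadic decomposition of a window\<close>

lemma sqrt_plus_three_sqrt_le: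
  fixes x y :: real
  assumes "0 \<le> y" "y \<le> x"
  shows "sqrt x + 3 * sqrt y \<le> 3 * sqrt (x + y)"
proof -
  have "sqrt x * sqrt y \<le> sqrt x * sqrt x"
    using assms by (intro mult_left_mono) auto
  moreover have "(sqrt x + 3 * sqrt y)\<^sup>2 = x + 6 * (sqrt x * sqrt y) + 9 * y"
    using assms by (simp add: power2_eq_square algebra_simps)
  ultimately have "(sqrt x + 3 * sqrt y)\<^sup>2 \<le> 9 * (x + y)"
    using assms by simp
  then have "sqrt x + 3 * sqrt y \<le> sqrt (9 * (x + y))"
    by (rule real_le_rsqrt)
  also have "\<dots> = 3 * sqrt (x + y)"
    by (simp only: real_sqrt_mult) simp
  finally show ?thesis .
qed

lemma power2_dvd_power2_if_le_less:
  fixes n :: nat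
  assumes "2 ^ i \<le> n" "n < 2 ^ Suc j"
  shows "(2::nat) ^ i dvd 2 ^ j"
proof -
  have "(2::nat) ^ i < 2 ^ Suc j"
    using assms by linarith
  then show ?thesis
    by (simp add: le_imp_power_dvd del: power_Suc)
qed

locale dyadic_block_bound =
  fixes g :: "nat \<Rightarrow> real" and A :: real and s e :: nat
  assumes A_nonneg: "0 \<le> A"
    and block_le: "\<And>k m. s \<le> m * 2 ^ k + 1 \<Longrightarrow> (m + 1) * 2 ^ k \<le> e \<Longrightarrow>
                     (\<Sum>t\<in>{m * 2 ^ k + 1..(m + 1) * 2 ^ k}. g t) \<le> A * sqrt (2 ^ k)"
begin

text \<open>Greedy decomposition into dyadic blocks of decreasing lengths: with \<open>2^j \<le> n < 2^(j+1)\<close>,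
  split off one block of length \<open>2^j\<close> and recurse on the remaining \<open>n - 2^j < 2^j\<close> points.\<close>

lemma sum_from_aligned_le:
  assumes "\<forall>j. 2 ^ j \<le> n \<longrightarrow> 2 ^ j dvd a" "s \<le> a + 1" "a + n \<le> e"
  shows "(\<Sum>t\<in>{a + 1..a + n}. g t) \<le> 3 * A * sqrt n"
  using assms
proof (induction n arbitrary: a rule: less_induct)
  case (less n)
  show ?case
  proof (cases "n = 0")
    case False
    then obtain j where j: "2 ^ j \<le> n" "n < 2 ^ Suc j"
      using ex_power_ivl1[of 2 n] by auto
    define n' where "n' = n - 2 ^ j"
    have n': "n' < n" "n' < 2 ^ j" "n = 2 ^ j + n'"
      using j by (auto simp: n'_def)
    obtain m where m: "a = m * 2 ^ j"
      using less.prems(1) j by (metis dvd_def mult.commute)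
    have "(\<Sum>t\<in>{a + 1..a + 2 ^ j}. g t) \<le> A * sqrt (2 ^ j)"
      using block_le[of m j] less.prems j m by (simp add: algebra_simps)
    moreover have "(\<Sum>t\<in>{(a + 2 ^ j) + 1..(a + 2 ^ j) + n'}. g t) \<le> 3 * A * sqrt n'"
    proof (rule less.IH)
      show "\<forall>i. 2 ^ i \<le> n' \<longrightarrow> 2 ^ i dvd a + 2 ^ j"
        using less.prems(1) n' power2_dvd_power2_if_le_less by auto
    qed (use n' less.prems in auto)
    ultimately have "(\<Sum>t\<in>{a + 1..a + n}. g t) \<le> A * (sqrt (2 ^ j) + 3 * sqrt n')"
      using sum.ub_add_nat[of "a + 1" "a + 2 ^ j" g n'] n' by (simp add: algebra_simps)
    also have "\<dots> \<le> A * (3 * sqrt n)"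
      using sqrt_plus_three_sqrt_le[of n' "2 ^ j"] n' A_nonneg by (intro mult_left_mono) auto
    finally show ?thesis
      by simp
  qed simp
qed

lemma sum_to_aligned_le:
  assumes "\<forall>j. 2 ^ j \<le> n \<longrightarrow> 2 ^ j dvd a + n" "s \<le> a + 1" "a + n \<le> e"
  shows "(\<Sum>t\<in>{a + 1..a + n}. g t) \<le> 3 * A * sqrt n"
  using assms
proof (induction n arbitrary: a rule: less_induct)
  case (less n)
  show ?case
  proof (cases "n = 0")
    case False
    then obtain j where j: "2 ^ j \<le> n" "n < 2 ^ Suc j"
      using ex_power_ivl1[of 2 n] by auto
    define n' where "n' = n - 2 ^ j"
    have n': "n' < n" "n' < 2 ^ j" "n = n' + 2 ^ j"
      using j by (auto simp: n'_def)
    obtain q where q: "a + n = q * 2 ^ j"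
      using less.prems(1) j by (metis dvd_def mult.commute)
    with n' obtain m where m: "a + n' = m * 2 ^ j"
      by (metis add.assoc add_diff_cancel_right' diff_mult_distrib mult_1)
    have "(\<Sum>t\<in>{(a + n') + 1..(a + n') + 2 ^ j}. g t) \<le> A * sqrt (2 ^ j)"
      using block_le[of m j] less.prems n' m by (simp add: algebra_simps)
    moreover have "(\<Sum>t\<in>{a + 1..a + n'}. g t) \<le> 3 * A * sqrt n'"
    proof (rule less.IH)
      show "\<forall>i. 2 ^ i \<le> n' \<longrightarrow> 2 ^ i dvd a + n'"
        using m n' power2_dvd_power2_if_le_less by (auto intro: dvd_mult)
    qed (use n' less.prems in auto)
    ultimately have "(\<Sum>t\<in>{a + 1..a + n}. g t) \<le> A * (sqrt (2 ^ j) + 3 * sqrt n')"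
      using sum.ub_add_nat[of "a + 1" "a + n'" g "2 ^ j"] n' by (simp add: algebra_simps)
    also have "\<dots> \<le> A * (3 * sqrt n)"
      using sqrt_plus_three_sqrt_le[of n' "2 ^ j"] n' A_nonneg by (intro mult_left_mono) (auto simp: add.commute)
    finally show ?thesis
      by simp
  qed simp
qed

text \<open>Cut at the last multiple \<open>b\<close> of \<open>2^J\<close> before the end, where \<open>2^J \<le> n < 2^(J+1)\<close>:
  both pieces are shorter than \<open>2^(J+1)\<close>, so \<open>b\<close> is aligned for each of them.\<close>

lemma window_sum_le:
  assumes "s \<le> a + 1" "a + n \<le> e"
  shows "(\<Sum>t\<in>{a + 1..a + n}. g t) \<le> 6 * A * sqrt n"
proof (cases "n = 0")
  case False
  then obtain J where J: "2 ^ J \<le> n" "n < 2 ^ Suc J"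
    using ex_power_ivl1[of 2 n] by auto
  define b where "b = (a + n) div 2 ^ J * 2 ^ J"
  have "a + n = b + (a + n) mod 2 ^ J"
    unfolding b_def by (rule div_mult_mod_eq[symmetric])
  moreover have "(a + n) mod 2 ^ J < 2 ^ J"
    by simp
  ultimately have b: "a \<le> b" "b \<le> a + n" "a + n < b + 2 ^ J"
    using J by linarith+
  have aligned: "2 ^ i dvd b" if "2 ^ i \<le> n'" "n' \<le> n" for i n'
  proof -
    have "(2::nat) ^ i dvd 2 ^ J"
      using that J by (intro power2_dvd_power2_if_le_less[of i n]) auto
    then show ?thesis
      by (simp add: b_def)
  qed
  have "(\<Sum>t\<in>{a + 1..a + (b - a)}. g t) \<le> 3 * A * sqrt (b - a)"
    using sum_to_aligned_le[of "b - a" a] aligned[of _ "b - a"] assms b by auto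
  moreover have "(\<Sum>t\<in>{b + 1..b + (a + n - b)}. g t) \<le> 3 * A * sqrt (a + n - b)"
    using sum_from_aligned_le[of "a + n - b" b] aligned[of _ "a + n - b"] assms b by auto
  ultimately have "(\<Sum>t\<in>{a + 1..a + n}. g t) \<le> 3 * A * sqrt (b - a) + 3 * A * sqrt (a + n - b)"
    using sum.ub_add_nat[of "a + 1" b g "a + n - b"] b by simp
  also have "\<dots> \<le> 3 * A * sqrt n + 3 * A * sqrt n"
    using b A_nonneg by (intro add_mono mult_left_mono) auto
  finally show ?thesis
    by simp
qed (simp add: A_nonneg)

end

section \<open>Projected online gradient descent\<close>

lemma projected_gradient_step_le:
  fixes x g v :: "'a::euclidean_space"
  assumes "convex S" "closed S" "v \<in> S"
  shows "2 * \<eta> * (g \<bullet> (x - v))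
           \<le> (norm (x - v))\<^sup>2 - (norm (closest_point S (x - \<eta> *\<^sub>R g) - v))\<^sup>2 + \<eta>\<^sup>2 * (norm g)\<^sup>2"
proof -
  have "dist (closest_point S (x - \<eta> *\<^sub>R g)) (closest_point S v) \<le> dist (x - \<eta> *\<^sub>R g) v"
    using assms by (intro closest_point_lipschitz) auto
  then have "norm (closest_point S (x - \<eta> *\<^sub>R g) - v) \<le> norm ((x - v) - \<eta> *\<^sub>R g)"
    using closest_point_self[OF assms(3)] by (simp add: dist_norm algebra_simps)
  then have "(norm (closest_point S (x - \<eta> *\<^sub>R g) - v))\<^sup>2 \<le> (norm ((x - v) - \<eta> *\<^sub>R g))\<^sup>2"
    by (intro power_mono) auto
  also have "\<dots> = (norm (x - v))\<^sup>2 - 2 * ((x - v) \<bullet> (\<eta> *\<^sub>R g)) + (norm (\<eta> *\<^sub>R g))\<^sup>2"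
    using dot_norm_neg[of "x - v" "\<eta> *\<^sub>R g"] by simp
  also have "\<dots> = (norm (x - v))\<^sup>2 - 2 * \<eta> * (g \<bullet> (x - v)) + \<eta>\<^sup>2 * (norm g)\<^sup>2"
    by (simp add: inner_commute power_mult_distrib)
  finally show ?thesis
    by simp
qed

lemma ogd_linearized_regret_le:
  fixes x g :: "nat \<Rightarrow> 'a::euclidean_space"
  assumes S: "convex S" "closed S" "v \<in> S" and \<eta>: "0 < \<eta>" and "lo \<le> hi"
    and step: "\<And>t. t \<in> {lo..hi} \<Longrightarrow> x (Suc t) = closest_point S (x t - \<eta> *\<^sub>R g t)"
    and g: "\<And>t. t \<in> {lo..hi} \<Longrightarrow> norm (g t) \<le> G"
    and x: "norm (x lo - v) \<le> D"
  shows "(\<Sum>t = lo..hi. g t \<bullet> (x t - v)) \<le> D\<^sup>2 / (2 * \<eta>) + \<eta> * G\<^sup>2 * (hi + 1 - lo) / 2"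
proof -
  define d where "d t = (norm (x t - v))\<^sup>2" for t
  have "g t \<bullet> (x t - v) \<le> (d t - d (Suc t)) / (2 * \<eta>) + \<eta> * G\<^sup>2 / 2" if t: "t \<in> {lo..hi}" for t
  proof -
    have "\<eta>\<^sup>2 * (norm (g t))\<^sup>2 \<le> \<eta>\<^sup>2 * G\<^sup>2"
      using g[OF t] by (intro mult_left_mono power_mono) auto
    then have "2 * \<eta> * (g t \<bullet> (x t - v)) \<le> d t - d (Suc t) + \<eta>\<^sup>2 * G\<^sup>2"
      using projected_gradient_step_le[OF S, of \<eta> "g t" "x t"] step[OF t] by (simp add: d_def)
    then show ?thesis
      using \<eta> by (simp add: field_simps power2_eq_square)
  qed
  then have "(\<Sum>t = lo..hi. g t \<bullet> (x t - v))
      \<le> (\<Sum>t = lo..hi. (d t - d (Suc t)) / (2 * \<eta>) + \<eta> * G\<^sup>2 / 2)"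
    by (rule sum_mono)
  also have "\<dots> = (\<Sum>t = lo..hi. d t - d (Suc t)) / (2 * \<eta>) + (hi + 1 - lo) * (\<eta> * G\<^sup>2 / 2)"
    by (simp add: sum.distrib sum_divide_distrib)
  also have "(\<Sum>t = lo..hi. d t - d (Suc t)) = d lo - d (Suc hi)"
    using sum_Suc_diff[of lo hi "\<lambda>t. - d t"] \<open>lo \<le> hi\<close> by simp
  also have "\<dots> \<le> D\<^sup>2"
    using power_mono[OF x norm_ge_zero, of 2] zero_le_power2[of "norm (x (Suc hi) - v)"]
    unfolding d_def by linarith
  finally show ?thesis
    using \<eta> by (simp add: divide_right_mono ac_simps)
qed

lemma ogd_regret_le:
  fixes x g :: "nat \<Rightarrow> 'a::euclidean_space"
  assumes S: "convex S" "closed S" "v \<in> S" and "lo \<le> hi" "0 \<le> D" "0 \<le> G"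
    and step: "\<And>t. t \<in> {lo..hi} \<Longrightarrow>
                 x (Suc t) = closest_point S (x t - (D / (G * sqrt (hi + 1 - lo))) *\<^sub>R g t)"
    and g: "\<And>t. t \<in> {lo..hi} \<Longrightarrow> norm (g t) \<le> G"
    and x: "\<And>t. t \<in> {lo..hi} \<Longrightarrow> norm (x t - v) \<le> D"
  shows "(\<Sum>t = lo..hi. g t \<bullet> (x t - v)) \<le> D * G * sqrt (hi + 1 - lo)"
proof (cases "D = 0 \<or> G = 0")
  case True
  \<comment> \<open>then the step size is \<open>0\<close> (for \<open>G = 0\<close> by division by zero), but every term is \<open>\<le> G D = 0\<close>\<close>
  have "g t \<bullet> (x t - v) \<le> 0" if t: "t \<in> {lo..hi}" for t
  proof -
    have "g t \<bullet> (x t - v) \<le> norm (g t) * norm (x t - v)"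
      by (rule norm_cauchy_schwarz)
    also have "\<dots> \<le> G * D"
      using g[OF t] x[OF t] \<open>0 \<le> G\<close> by (intro mult_mono) auto
    finally show ?thesis
      using True by auto
  qed
  then have "(\<Sum>t = lo..hi. g t \<bullet> (x t - v)) \<le> 0"
    by (rule sum_nonpos)
  then show ?thesis
    using True by auto
next
  case False
  define n where "n = real (hi + 1 - lo)"
  have n: "0 < n" "sqrt n * sqrt n = n"
    using \<open>lo \<le> hi\<close> by (auto simp: n_def)
  define \<eta> where "\<eta> = D / (G * sqrt n)"
  have "0 < \<eta>"
    using False n assms by (simp add: \<eta>_def)
  have "(\<Sum>t = lo..hi. g t \<bullet> (x t - v)) \<le> D\<^sup>2 / (2 * \<eta>) + \<eta> * G\<^sup>2 * n / 2"
    unfolding n_def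
  proof (rule ogd_linearized_regret_le[OF S \<open>0 < \<eta>\<close> \<open>lo \<le> hi\<close>])
    show "x (Suc t) = closest_point S (x t - \<eta> *\<^sub>R g t)" if "t \<in> {lo..hi}" for t
      using step[OF that] by (simp add: \<eta>_def n_def)
    show "norm (x lo - v) \<le> D"
      using x \<open>lo \<le> hi\<close> by simp
  qed (use g in simp)
  also have "\<dots> = D * G * sqrt n"
    using False n assms by (simp add: \<eta>_def field_simps power2_eq_square)
  finally show ?thesis
    by (simp add: n_def)
qed

section \<open>Counting the experts\<close>

lemma ivl_hi_plus_one_minus_lo:
  assumes "1 \<le> i"
  shows "ivl_hi k i + 1 - ivl_lo k i = 2 ^ k"
  using assms by (cases i) (auto simp: ivl_lo_def ivl_hi_def)

lemma ivl_lo_le_hi: "1 \<le> i \<Longrightarrow> ivl_lo k i \<le> ivl_hi k i"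
  by (cases i) (auto simp: ivl_lo_def ivl_hi_def)

lemma one_le_ivl_lo: "1 \<le> ivl_lo k i"
  by (simp add: ivl_lo_def)

definition started :: "nat \<Rightarrow> (nat \<times> nat) set" where
  "started T = {(k, i). (k, i) \<in> covering T \<and> ivl_lo k i \<le> T}"

lemma active_subset_started: "t \<le> T \<Longrightarrow> active T t \<subseteq> started T"
  by (auto simp: active_def started_def)

lemma started_subset: "started T \<subseteq> {k. 2 ^ k \<le> T} \<times> {1..T}"
proof
  fix z assume "z \<in> started T"
  then obtain k i where z: "z = (k, i)" "2 ^ k \<le> T" "1 \<le> i" "(i - 1) * 2 ^ k + 1 \<le> T"
    by (auto simp: started_def covering_def ivl_lo_def)
  have "i - 1 \<le> (i - 1) * 2 ^ k"
    by simp
  then have "i \<le> T"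
    using z by linarith
  then show "z \<in> {k. 2 ^ k \<le> T} \<times> {1..T}"
    using z by auto
qed

lemma card_levels_le:
  fixes T :: nat
  assumes "1 \<le> T"
  shows "real (card {k. 2 ^ k \<le> T}) \<le> 1 + log 2 T"
proof -
  have "{k. 2 ^ k \<le> T} \<subseteq> {..nat \<lfloor>log 2 T\<rfloor>}"
  proof
    fix k assume "k \<in> {k. 2 ^ k \<le> T}"
    then have "(2::real) ^ k \<le> T"
      by (metis mem_Collect_eq of_nat_le_iff of_nat_numeral of_nat_power)
    then have "real k \<le> log 2 T"
      by (intro le_log_of_power) auto
    then show "k \<in> {..nat \<lfloor>log 2 T\<rfloor>}"
      by (simp add: le_nat_floor)
  qed
  then have "card {k. 2 ^ k \<le> T} \<le> nat \<lfloor>log 2 T\<rfloor> + 1"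
    using card_mono[of "{..nat \<lfloor>log 2 T\<rfloor>}"] by fastforce
  moreover have "real (nat \<lfloor>log 2 T\<rfloor>) \<le> log 2 T"
    using assms by simp
  ultimately show ?thesis
    by linarith
qed

lemma finite_levels: "finite {k. 2 ^ k \<le> (T::nat)}"
proof (rule finite_subset)
  show "{k. 2 ^ k \<le> T} \<subseteq> {..T}"
  proof
    fix k assume "k \<in> {k. 2 ^ k \<le> T}"
    then show "k \<in> {..T}"
      using order.strict_trans2[OF less_exp[of k]] by fastforce
  qed
qed simp

lemma finite_started: "finite (started T)"
  using started_subset by (rule finite_subset) (simp add: finite_levels)

lemma card_started_le:
  assumes "1 \<le> T"
  shows "real (card (started T)) \<le> T * (1 + log 2 T)"
proof -
  have "card (started T) \<le> card ({k. 2 ^ k \<le> T} \<times> {1..T})"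
    by (rule card_mono[OF _ started_subset]) (simp add: finite_levels)
  then have "real (card (started T)) \<le> real (card {k. 2 ^ k \<le> T}) * T"
    by (simp add: card_cartesian_product flip: of_nat_mult)
  also have "\<dots> \<le> (1 + log 2 T) * T"
    using card_levels_le[OF assms] by (intro mult_right_mono) auto
  finally show ?thesis
    by (simp add: mult.commute)
qed

lemma card_started_pos:
  assumes "1 \<le> T"
  shows "0 < card (started T)"
proof -
  have "(0, 1) \<in> started T"
    using assms by (simp add: started_def covering_def ivl_lo_def)
  then show ?thesis
    using finite_started card_gt_0_iff by blast
qed

lemma cT_nonneg: "1 \<le> T \<Longrightarrow> 0 \<le> cT T"
  by (simp add: cT_def)

lemma ln_card_started_le_cT:
  assumes "1 \<le> T"
  shows "ln (card (started T) * (1 + 3 * ln (1 + real T))) \<le> cT T"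
proof -
  define L where "L = ln (1 + real T)"
  have L: "0 \<le> L"
    by (simp add: L_def)
  have "ln (card (started T) * (1 + 3 * L)) = ln (card (started T)) + ln (1 + 3 * L)"
    using card_started_pos[OF assms] L by (simp add: ln_mult)
  also have "ln (card (started T)) \<le> ln (T * (1 + log 2 T))"
    using card_started_le[OF assms] card_started_pos[OF assms] by simp
  also have "\<dots> = ln T + ln (1 + log 2 T)"
    using assms by (simp add: ln_mult_pos add_pos_nonneg)
  also have "1 + 3 * L \<le> exp 1 * ((5 + 3 * L) / 2)"
    using L exp_ge_add_one_self[of 1] mult_right_mono[of 2 "exp 1" "(5 + 3 * L) / 2"] by simp
  then have "ln (1 + 3 * L) \<le> ln (exp 1 * ((5 + 3 * L) / 2))"
    using L by simp
  also have "\<dots> = 1 + ln ((5 + 3 * L) / 2)"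
    using L by (subst ln_mult_pos) (auto simp: add_pos_nonneg)
  finally show ?thesis
    by (simp add: cT_def L_def)
qed

section \<open>Analysis of AOD\<close>

locale aod =
  fixes \<Omega> :: "'a::euclidean_space set"
    and f :: "nat \<Rightarrow> 'a \<Rightarrow> real"
    and grad :: "nat \<Rightarrow> 'a \<Rightarrow> 'a"
    and D G :: real
    and T :: nat
    and init :: "nat \<Rightarrow> 'a"
    and w :: "nat \<Rightarrow> 'a"
  assumes T: "1 \<le> T"
    and convex: "convex \<Omega>"
    and closed: "closed \<Omega>"
    and zero_in: "0 \<in> \<Omega>"
    and fconv: "\<And>t. t \<in> {1..T} \<Longrightarrow> convex_on \<Omega> (f t)"
    and subgrad: "\<And>t u v. t \<in> {1..T} \<Longrightarrow> u \<in> \<Omega> \<Longrightarrow> v \<in> \<Omega> \<Longrightarrow>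
                    f t v \<ge> f t u + grad t u \<bullet> (v - u)"
    and A1: "\<And>t u. t \<in> {1..T} \<Longrightarrow> u \<in> \<Omega> \<Longrightarrow> norm (grad t u) \<le> G"
    and A2: "\<And>u v. u \<in> \<Omega> \<Longrightarrow> v \<in> \<Omega> \<Longrightarrow> norm (u - v) \<le> D"
    and A3: "\<And>t u. t \<in> {1..T} \<Longrightarrow> u \<in> \<Omega> \<Longrightarrow> 0 \<le> f t u \<and> f t u \<le> 1"
    and init: "\<And>k. init k \<in> \<Omega>"
    and plays: "AOD_plays T \<Omega> f grad D G init w"
begin

definition expert :: "nat \<Rightarrow> nat \<Rightarrow> nat \<Rightarrow> 'a" where
  "expert k i t = expert_pt \<Omega> grad D G init k i t"

definition regret :: "nat \<Rightarrow> nat \<Rightarrow> nat \<Rightarrow> real" where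
  "regret k i t = f t (w t) - f t (expert k i t)"

definition weight :: "nat \<Rightarrow> nat \<Rightarrow> nat \<Rightarrow> real" where
  "weight k i t = anh_weight (\<Sum>u\<in>{ivl_lo k i..<t}. regret k i u) (\<Sum>u\<in>{ivl_lo k i..<t}. \<bar>regret k i u\<bar>)"

definition total_weight :: "nat \<Rightarrow> real" where
  "total_weight t = (\<Sum>(k, i)\<in>active T t. weight k i t)"

lemma D_nonneg: "0 \<le> D"
  using A2[OF zero_in zero_in] by simp

lemma G_nonneg: "0 \<le> G"
proof -
  have "norm (grad 1 0) \<le> G"
    using A1 zero_in T by simp
  then show ?thesis
    by (rule order_trans[OF norm_ge_zero])
qed

lemma expert_in: "expert k i t \<in> \<Omega>"
  unfolding expert_def
proof (induction t arbitrary: i)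
  case (Suc t)
  then show ?case
    using init closest_point_in_set[OF closed] zero_in by (auto simp: ogd_step_def)
qed (simp add: init)

lemma expert_step:
  "ivl_lo k i \<le> t \<Longrightarrow>
     expert k i (Suc t) = closest_point \<Omega> (expert k i t - eta D G k *\<^sub>R grad t (expert k i t))"
  by (simp add: expert_def ogd_step_def)

lemma weight_nonneg: "0 \<le> weight k i t"
  unfolding weight_def by (intro anh_weight_nonneg sum_nonneg) simp

lemma finite_active: "t \<le> T \<Longrightarrow> finite (active T t)"
  using active_subset_started finite_started by (rule finite_subset)

lemma fresh_expert_active: "t \<in> {1..T} \<Longrightarrow> (0, t) \<in> active T t"
  by (simp add: active_def covering_def ivl_lo_def ivl_hi_def)

lemma total_weight_pos:
  assumes t: "t \<in> {1..T}"
  shows "0 < total_weight t"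
proof -
  have "weight 0 t t \<le> total_weight t"
    using member_le_sum[OF fresh_expert_active[OF t], of "\<lambda>z. weight (fst z) (snd z) t"]
      finite_active[of t] t weight_nonneg
    by (simp add: total_weight_def split_def)
  moreover have "weight 0 t t = anh_weight 0 0"
    by (simp add: weight_def ivl_lo_def)
  ultimately show ?thesis
    using anh_weight_0_0_pos by linarith
qed

lemma plays_eq:
  "t \<in> {1..T} \<Longrightarrow> w t = (\<Sum>(k, i)\<in>active T t. (weight k i t / total_weight t) *\<^sub>R expert k i t)"
  using plays unfolding AOD_plays_def Let_def weight_def total_weight_def regret_def expert_def
  by blast

lemma plays_convex_combination:
  assumes t: "t \<in> {1..T}"
  defines "p \<equiv> \<lambda>(k, i). weight k i t / total_weight t"
  shows "finite (active T t)" "active T t \<noteq> {}" "(\<Sum>z\<in>active T t. p z) = 1"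
    "\<And>z. 0 \<le> p z" "w t = (\<Sum>z\<in>active T t. p z *\<^sub>R (\<lambda>(k, i). expert k i t) z)"
proof -
  show "finite (active T t)"
    using t by (simp add: finite_active)
  show "active T t \<noteq> {}"
    using fresh_expert_active[OF t] by blast
  show "(\<Sum>z\<in>active T t. p z) = 1"
    using total_weight_pos[OF t]
    by (simp add: p_def total_weight_def split_def flip: sum_divide_distrib)
  show "0 \<le> p z" for z
    using total_weight_pos[OF t] weight_nonneg by (auto simp: p_def split: prod.split)
  show "w t = (\<Sum>z\<in>active T t. p z *\<^sub>R (\<lambda>(k, i). expert k i t) z)"
    using plays_eq[OF t] by (simp add: p_def split_def)
qed

lemma plays_in:
  assumes t: "t \<in> {1..T}"
  shows "w t \<in> \<Omega>"
  unfolding plays_convex_combination(5)[OF t]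
  using plays_convex_combination[OF t] expert_in
  by (intro convex_sum[OF _ convex]) (auto split: prod.split)

lemma abs_regret_le_1: "t \<in> {1..T} \<Longrightarrow> \<bar>regret k i t\<bar> \<le> 1"
  using A3[of t "w t"] A3[of t "expert k i t"] plays_in expert_in unfolding regret_def by force

text \<open>By Jensen, the play is at least as good as the weighted average of the experts.\<close>

lemma weighted_regret_nonpos:
  assumes t: "t \<in> {1..T}"
  shows "(\<Sum>(k, i)\<in>active T t. weight k i t * regret k i t) \<le> 0"
proof -
  define p where "p = (\<lambda>(k, i). weight k i t / total_weight t)"
  define y where "y = (\<lambda>(k, i). expert k i t)"
  note comb = plays_convex_combination[OF t, folded p_def y_def]
  have "f t (w t) \<le> (\<Sum>z\<in>active T t. p z * f t (y z))"
    unfolding comb(5) using comb expert_in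
    by (intro convex_on_sum[OF _ _ fconv[OF t]]) (auto simp: y_def split: prod.split)
  also have "\<dots> = (\<Sum>z\<in>active T t. p z) * f t (w t) - (\<Sum>z\<in>active T t. p z * (f t (w t) - f t (y z)))"
    by (simp add: right_diff_distrib sum_subtractf sum_distrib_right)
  finally have "(\<Sum>z\<in>active T t. p z * (f t (w t) - f t (y z))) \<le> 0"
    using comb(3) by simp
  moreover have "(\<Sum>(k, i)\<in>active T t. weight k i t * regret k i t)
      = total_weight t * (\<Sum>z\<in>active T t. p z * (f t (w t) - f t (y z)))"
    using total_weight_pos[OF t] by (simp add: sum_distrib_left p_def y_def regret_def split_def)
  ultimately show ?thesis
    using total_weight_pos[OF t] by (simp add: mult_nonneg_nonpos)
qed

text \<open>Truncating at the end of the interval freezes an expert's term in the potential once the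
  expert is no longer active.\<close>

definition cum_regret :: "nat \<Rightarrow> nat \<Rightarrow> nat \<Rightarrow> real" where
  "cum_regret k i t = (\<Sum>u\<in>{ivl_lo k i..min t (ivl_hi k i)}. regret k i u)"

definition cum_abs_regret :: "nat \<Rightarrow> nat \<Rightarrow> nat \<Rightarrow> real" where
  "cum_abs_regret k i t = (\<Sum>u\<in>{ivl_lo k i..min t (ivl_hi k i)}. \<bar>regret k i u\<bar>)"

definition expert_potential :: "nat \<Rightarrow> nat \<Rightarrow> nat \<Rightarrow> real" where
  "expert_potential k i t = Phi (cum_regret k i t) (cum_abs_regret k i t) - 3 * ln (1 + cum_abs_regret k i t)"

definition potential :: "nat \<Rightarrow> real" where
  "potential t = (\<Sum>(k, i)\<in>started T. expert_potential k i t)"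

lemma abs_cum_regret_le: "\<bar>cum_regret k i t\<bar> \<le> cum_abs_regret k i t"
  unfolding cum_regret_def cum_abs_regret_def by (rule sum_abs)

lemma cum_abs_regret_le_card:
  assumes "t \<le> T"
  shows "cum_abs_regret k i t \<le> card {ivl_lo k i..min t (ivl_hi k i)}"
proof -
  have "cum_abs_regret k i t \<le> real (card {ivl_lo k i..min t (ivl_hi k i)}) * 1"
    unfolding cum_abs_regret_def
  proof (rule sum_bounded_above)
    fix u assume "u \<in> {ivl_lo k i..min t (ivl_hi k i)}"
    then have "u \<in> {1..T}"
      using assms one_le_ivl_lo[of k i] by auto
    then show "\<bar>regret k i u\<bar> \<le> 1"
      by (rule abs_regret_le_1)
  qed
  then show ?thesis
    by simp
qed

lemma expert_potential_step_active:
  assumes a: "(k, i) \<in> active T t" and t: "t \<in> {1..T}"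
  shows "expert_potential k i t \<le> expert_potential k i (t - 1) + weight k i t * regret k i t"
proof -
  have lo_hi: "ivl_lo k i \<le> t" "t \<le> ivl_hi k i"
    using a by (auto simp: active_def)
  then have before: "{ivl_lo k i..<t} = {ivl_lo k i..min (t - 1) (ivl_hi k i)}"
    using t by auto
  have now: "{ivl_lo k i..min t (ivl_hi k i)} = insert t {ivl_lo k i..min (t - 1) (ivl_hi k i)}"
    using lo_hi t by auto
  have "t \<notin> {ivl_lo k i..min (t - 1) (ivl_hi k i)}"
    using t by auto
  then have "cum_regret k i t = cum_regret k i (t - 1) + regret k i t"
    and "cum_abs_regret k i t = cum_abs_regret k i (t - 1) + \<bar>regret k i t\<bar>"
    unfolding cum_regret_def cum_abs_regret_def now by simp_all
  moreover have "weight k i t = anh_weight (cum_regret k i (t - 1)) (cum_abs_regret k i (t - 1))"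
    unfolding weight_def cum_regret_def cum_abs_regret_def before ..
  ultimately show ?thesis
    unfolding expert_potential_def
    using Phi_potential_step[OF abs_cum_regret_le abs_regret_le_1[OF t]] by simp
qed

lemma expert_potential_step_inactive:
  assumes "(k, i) \<notin> active T t" "(k, i) \<in> covering T"
  shows "expert_potential k i t = expert_potential k i (t - 1)"
proof -
  have "t < ivl_lo k i \<or> ivl_hi k i < t"
    using assms by (auto simp: active_def)
  then have same: "{ivl_lo k i..min t (ivl_hi k i)} = {ivl_lo k i..min (t - 1) (ivl_hi k i)}"
    by auto
  show ?thesis
    unfolding expert_potential_def cum_regret_def cum_abs_regret_def same ..
qed

lemma potential_step:
  assumes t: "t \<in> {1..T}"
  shows "potential t \<le> potential (t - 1)"
proof -
  have "potential t \<le> (\<Sum>(k, i)\<in>started T. expert_potential k i (t - 1)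
                        + (if (k, i) \<in> active T t then weight k i t * regret k i t else 0))"
    unfolding potential_def
    using expert_potential_step_active[OF _ t] expert_potential_step_inactive
    by (intro sum_mono) (auto simp: started_def)
  also have "\<dots> = potential (t - 1) + (\<Sum>(k, i)\<in>active T t. weight k i t * regret k i t)"
    using active_subset_started[of t T] t finite_started
    by (simp add: potential_def sum.distrib split_def sum.If_cases Int_absorb1)
  also have "\<dots> \<le> potential (t - 1)"
    using weighted_regret_nonpos[OF t] by simp
  finally show ?thesis .
qed

lemma potential_le_card_started: "t \<le> T \<Longrightarrow> potential t \<le> card (started T)"
proof (induction t)
  case 0
  have "{ivl_lo k i..min 0 (ivl_hi k i)} = {}" for k i
    using one_le_ivl_lo[of k i] by auto
  then show ?case
    by (simp add: potential_def expert_potential_def cum_regret_def cum_abs_regret_def Phi_def)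
next
  case (Suc t)
  then show ?case
    using potential_step[of "Suc t"] by simp
qed

lemma Phi_cum_regret_le:
  assumes "(k, i) \<in> started T"
  shows "Phi (cum_regret k i T) (cum_abs_regret k i T) \<le> card (started T) * (1 + 3 * ln (1 + real T))"
proof -
  have ln_le: "ln (1 + cum_abs_regret k' i' T) \<le> ln (1 + real T)" for k' i'
  proof -
    have "card {ivl_lo k' i'..min T (ivl_hi k' i')} \<le> card {1..T}"
      using one_le_ivl_lo[of k' i'] by (intro card_mono) auto
    then have "cum_abs_regret k' i' T \<le> T"
      using cum_abs_regret_le_card[of T k' i'] by simp
    moreover have "0 \<le> cum_abs_regret k' i' T"
      using abs_cum_regret_le[of k' i' T] by linarith
    ultimately show ?thesis
      by simp
  qed
  have "Phi (cum_regret k i T) (cum_abs_regret k i T)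
      \<le> (\<Sum>(k', i')\<in>started T. Phi (cum_regret k' i' T) (cum_abs_regret k' i' T))"
    using member_le_sum[OF assms, of "\<lambda>z. Phi (cum_regret (fst z) (snd z) T) (cum_abs_regret (fst z) (snd z) T)"]
      finite_started
    by (simp add: split_def Phi_eq_exp)
  also have "\<dots> = potential T + (\<Sum>(k', i')\<in>started T. 3 * ln (1 + cum_abs_regret k' i' T))"
    by (simp add: potential_def expert_potential_def split_def sum_subtractf)
  also have "\<dots> \<le> card (started T) + (\<Sum>(k', i')\<in>started T. 3 * ln (1 + real T))"
    using potential_le_card_started[of T] ln_le by (intro add_mono sum_mono) auto
  also have "\<dots> = card (started T) * (1 + 3 * ln (1 + real T))"
    by (simp add: algebra_simps)
  finally show ?thesis .
qed

lemma meta_regret_le: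
  assumes i: "1 \<le> i" and hi: "ivl_hi k i \<le> T"
  shows "(\<Sum>t\<in>{ivl_lo k i..ivl_hi k i}. regret k i t) \<le> sqrt (3 * cT T) * sqrt (2 ^ k)"
proof -
  have R: "cum_regret k i T = (\<Sum>t\<in>{ivl_lo k i..ivl_hi k i}. regret k i t)"
    using hi by (simp add: cum_regret_def min_absorb2)
  have "cum_abs_regret k i T \<le> card {ivl_lo k i..ivl_hi k i}"
    using cum_abs_regret_le_card[of T k i] hi by (simp add: min_absorb2)
  also have "\<dots> = 2 ^ k"
    using ivl_hi_plus_one_minus_lo[OF i, of k] by simp
  finally have C: "cum_abs_regret k i T \<le> 2 ^ k" .
  have started: "(k, i) \<in> started T"
    using i hi ivl_lo_le_hi[OF i, of k] order_trans[of "2 ^ k" "ivl_hi k i" T]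
    by (simp add: started_def covering_def ivl_hi_def)
  show ?thesis
  proof (cases "cum_regret k i T \<le> 0")
    case True
    moreover have "0 \<le> sqrt (3 * cT T) * sqrt (2 ^ k)"
      using cT_nonneg[OF T] by simp
    ultimately show ?thesis
      using R by linarith
  next
    case False
    then have pos: "0 < cum_regret k i T" "0 < cum_abs_regret k i T"
      using abs_cum_regret_le[of k i T] by linarith+
    have "exp ((cum_regret k i T)\<^sup>2 / (3 * cum_abs_regret k i T)) \<le> card (started T) * (1 + 3 * ln (1 + real T))"
      using Phi_cum_regret_le[OF started] pos by (simp add: Phi_eq_exp)
    moreover have "0 < card (started T) * (1 + 3 * ln (1 + real T))"
      using card_started_pos[OF T] by (simp add: add_pos_nonneg)
    ultimately have "(cum_regret k i T)\<^sup>2 / (3 * cum_abs_regret k i T)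
        \<le> ln (card (started T) * (1 + 3 * ln (1 + real T)))"
      by (simp add: ln_ge_iff)
    also have "\<dots> \<le> cT T"
      by (rule ln_card_started_le_cT[OF T])
    finally have "(cum_regret k i T)\<^sup>2 / (3 * cum_abs_regret k i T) \<le> cT T" .
    then have "(cum_regret k i T)\<^sup>2 \<le> 3 * cum_abs_regret k i T * cT T"
      using pos by (simp add: field_simps)
    also have "\<dots> \<le> 3 * 2 ^ k * cT T"
      using C cT_nonneg[OF T] by (intro mult_right_mono) auto
    finally have "cum_regret k i T \<le> sqrt (3 * 2 ^ k * cT T)"
      by (rule real_le_rsqrt)
    then show ?thesis
      using R by (simp add: real_sqrt_mult ac_simps)
  qed
qed

lemma expert_regret_le:
  assumes i: "1 \<le> i" and hi: "ivl_hi k i \<le> T" and v: "v \<in> \<Omega>"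
  shows "(\<Sum>t\<in>{ivl_lo k i..ivl_hi k i}. f t (expert k i t) - f t v) \<le> D * G * sqrt (2 ^ k)"
proof -
  have in_T: "t \<in> {1..T}" if "t \<in> {ivl_lo k i..ivl_hi k i}" for t
    using that one_le_ivl_lo[of k i] hi by auto
  have "(\<Sum>t\<in>{ivl_lo k i..ivl_hi k i}. f t (expert k i t) - f t v)
      \<le> (\<Sum>t\<in>{ivl_lo k i..ivl_hi k i}. grad t (expert k i t) \<bullet> (expert k i t - v))"
  proof (rule sum_mono)
    fix t assume "t \<in> {ivl_lo k i..ivl_hi k i}"
    then have "f t (expert k i t) + grad t (expert k i t) \<bullet> (v - expert k i t) \<le> f t v"
      using in_T expert_in v by (intro subgrad) auto
    then show "f t (expert k i t) - f t v \<le> grad t (expert k i t) \<bullet> (expert k i t - v)"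
      by (simp add: inner_diff_right)
  qed
  also have "\<dots> \<le> D * G * sqrt (ivl_hi k i + 1 - ivl_lo k i)"
  proof (rule ogd_regret_le[OF convex closed v ivl_lo_le_hi[OF i] D_nonneg G_nonneg])
    show "expert k i (Suc t) = closest_point \<Omega> (expert k i t
            - (D / (G * sqrt (ivl_hi k i + 1 - ivl_lo k i))) *\<^sub>R grad t (expert k i t))"
      if "t \<in> {ivl_lo k i..ivl_hi k i}" for t
      using that expert_step[of k i t] ivl_hi_plus_one_minus_lo[OF i] by (simp add: eta_def)
  qed (use A1 A2 in_T expert_in v in auto)
  finally show ?thesis
    using ivl_hi_plus_one_minus_lo[OF i, of k] by simp
qed

lemma block_regret_le:
  assumes "(m + 1) * 2 ^ k \<le> T" "v \<in> \<Omega>"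
  shows "(\<Sum>t\<in>{m * 2 ^ k + 1..(m + 1) * 2 ^ k}. f t (w t) - f t v)
           \<le> (sqrt (3 * cT T) + D * G) * sqrt (2 ^ k)"
proof -
  have ivl: "ivl_lo k (m + 1) = m * 2 ^ k + 1" "ivl_hi k (m + 1) = (m + 1) * 2 ^ k"
    by (simp_all add: ivl_lo_def ivl_hi_def)
  have "(\<Sum>t\<in>{m * 2 ^ k + 1..(m + 1) * 2 ^ k}. f t (w t) - f t v)
      = (\<Sum>t\<in>{ivl_lo k (m + 1)..ivl_hi k (m + 1)}. regret k (m + 1) t)
        + (\<Sum>t\<in>{ivl_lo k (m + 1)..ivl_hi k (m + 1)}. f t (expert k (m + 1) t) - f t v)"
    unfolding ivl regret_def by (simp flip: sum.distrib)
  also have "\<dots> \<le> sqrt (3 * cT T) * sqrt (2 ^ k) + D * G * sqrt (2 ^ k)"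
    using meta_regret_le[of "m + 1" k] expert_regret_le[of "m + 1" k v] assms ivl
    by (intro add_mono) auto
  finally show ?thesis
    by (simp add: algebra_simps)
qed

theorem adaptive_regret_le:
  assumes "1 \<le> s" "s + \<tau> - 1 \<le> T"
  shows "(\<Sum>t\<in>{s..s + \<tau> - 1}. f t (w t)) - (INF v\<in>\<Omega>. \<Sum>t\<in>{s..s + \<tau> - 1}. f t v)
           \<le> 6 * (sqrt (3 * cT T) + D * G) * sqrt \<tau>"
proof -
  define A where "A = sqrt (3 * cT T) + D * G"
  have "(\<Sum>t\<in>{s..s + \<tau> - 1}. f t (w t)) - 6 * A * sqrt \<tau> \<le> (\<Sum>t\<in>{s..s + \<tau> - 1}. f t v)"
    if v: "v \<in> \<Omega>" for v
  proof -
    interpret dyadic_block_bound "\<lambda>t. f t (w t) - f t v" A s "s + \<tau> - 1"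
      using block_regret_le[OF _ v] cT_nonneg[OF T] D_nonneg G_nonneg assms
      by unfold_locales (auto simp: A_def)
    have "{s..s + \<tau> - 1} = {(s - 1) + 1..(s - 1) + \<tau>}"
      using assms by auto
    then have "(\<Sum>t\<in>{s..s + \<tau> - 1}. f t (w t) - f t v) \<le> 6 * A * sqrt \<tau>"
      using window_sum_le[of "s - 1" \<tau>] assms by simp
    then show ?thesis
      by (simp add: sum_subtractf)
  qed
  then have "(\<Sum>t\<in>{s..s + \<tau> - 1}. f t (w t)) - 6 * A * sqrt \<tau>
      \<le> (INF v\<in>\<Omega>. \<Sum>t\<in>{s..s + \<tau> - 1}. f t v)"
    using zero_in by (intro cINF_greatest) auto
  then show ?thesis
    by (simp add: A_def)
qed

end

theorem theorem3:
  fixes \<Omega> :: "'a::euclidean_space set"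
    and f :: "nat \<Rightarrow> 'a \<Rightarrow> real"
    and grad :: "nat \<Rightarrow> 'a \<Rightarrow> 'a"
    and D G :: real
    and T :: nat
    and init :: "nat \<Rightarrow> 'a"
    and w :: "nat \<Rightarrow> 'a"
  assumes T: "1 \<le> T"
    and convex: "convex \<Omega>"
    and closed: "closed \<Omega>"
    and zero_in: "0 \<in> \<Omega>"
    and fconv: "\<And>t. t \<in> {1..T} \<Longrightarrow> convex_on \<Omega> (f t)"
    and subgrad: "\<And>t u v. t \<in> {1..T} \<Longrightarrow> u \<in> \<Omega> \<Longrightarrow> v \<in> \<Omega> \<Longrightarrow>
                    f t v \<ge> f t u + grad t u \<bullet> (v - u)"
    and A1: "\<And>t u. t \<in> {1..T} \<Longrightarrow> u \<in> \<Omega> \<Longrightarrow> norm (grad t u) \<le> G"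
    and A2: "\<And>u v. u \<in> \<Omega> \<Longrightarrow> v \<in> \<Omega> \<Longrightarrow> norm (u - v) \<le> D"
    and A3: "\<And>t u. t \<in> {1..T} \<Longrightarrow> u \<in> \<Omega> \<Longrightarrow> 0 \<le> f t u \<and> f t u \<le> 1"
    and init: "\<And>k. init k \<in> \<Omega>"
    and plays: "AOD_plays T \<Omega> f grad D G init w"
  shows "\<forall>\<tau>\<in>{1..T}. \<forall>s. 1 \<le> s \<and> s + \<tau> - 1 \<le> T \<longrightarrow>
           (\<Sum>t\<in>{s..s + \<tau> - 1}. f t (w t))
             - (INF v\<in>\<Omega>. \<Sum>t\<in>{s..s + \<tau> - 1}. f t v)
           \<le> 8 * (sqrt (3 * cT T) + D * G) * sqrt (real \<tau>)"
proof -
  interpret aod \<Omega> f grad D G T init w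
    by (unfold_locales; fact assms)
  have A: "0 \<le> sqrt (3 * cT T) + D * G"
    using cT_nonneg[OF T] D_nonneg G_nonneg by simp
  show ?thesis
  proof (intro ballI allI impI)
    fix \<tau> s assume "1 \<le> s \<and> s + \<tau> - 1 \<le> T"
    then have "(\<Sum>t\<in>{s..s + \<tau> - 1}. f t (w t)) - (INF v\<in>\<Omega>. \<Sum>t\<in>{s..s + \<tau> - 1}. f t v)
        \<le> 6 * (sqrt (3 * cT T) + D * G) * sqrt \<tau>"
      by (intro adaptive_regret_le) auto
    also have "\<dots> \<le> 8 * (sqrt (3 * cT T) + D * G) * sqrt \<tau>"
      using A by (intro mult_right_mono) auto
    finally show "(\<Sum>t\<in>{s..s + \<tau> - 1}. f t (w t)) - (INF v\<in>\<Omega>. \<Sum>t\<in>{s..s + \<tau> - 1}. f t v)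
        \<le> 8 * (sqrt (3 * cT T) + D * G) * sqrt (real \<tau>)" .
  qed
qed

end
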